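(* Let $T$ be a transaction that has not written key $k$ (i.e. no version of $k$ is in $T.writeset$), let $R$ be an Atomic Readset of committed key versions read by $T$, and suppose $R$ contains a version $k_m$ of $k$. If the AtomicRead procedure on input $k$ and $R$ returns a version $k_j$, then $j = m$, i.e. $k_j = k_m$.
   Context: Transactions $T_i$ are identified by IDs $i$ drawn from a totally ordered set of positive values; $0$ is a lower bound below all IDs. $k_i$ denotes the version of key $k$ written by transaction $T_i$ (a transaction writes at most one committed version of each key). $T_i.writeset$ is the set of key versions written by $T_i$, and $k_i.cowritten := T_i.writeset$ (so $k_i \in k_i.cowritten$). Atomic Readset: a set $R$ of key versions is an Atomic Readset if for every $k_i \in R$ and every $l_i \in k_i.cowritten$, if $R$ contains a version $l_j$ of key $l$ then $j \geq i$. AtomicRead procedure: input a key $k$ and a set $R$ of key versions; $\mathrm{KVI}[k]$ is a finite set of IDs of committed transactions that wrote key $k$. (1) Set $lower := \max(\{0\} \cup \{ i : l_i \in R \text{ for some key } l,\ k \in l_i.cowritten\})$. (2) If $\mathrm{KVI}[k]$ is empty and $lower = 0$, return NULL. (3) Consider candidate IDs $t \in \mathrm{KVI}[k]$ with $t \geq lower$ in decreasing order; $t$ is valid if there is no $l_t \in k_t.cowritten$ such that $R$ contains a version $l_j$ with $j < t$. Let $target$ be the largest valid candidate. (4) If none is valid return NULL; otherwise return $k_{target}$ and the new read set $R \cup \{k_{target}\}$. *)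

theory Defs
  imports Main
begin

(* Transaction IDs: type 'i, totally ordered, with 0 below all (positive) IDs.
   W i      : set of keys written by transaction T_i (its writeset, as keys).
   A key version k_i is the pair (k, i); it exists only if k \<in> W i.
   k_i.cowritten = {(l, i) | l \<in> W i}. *)

definition cowritten :: "('i \<Rightarrow> 'k set) \<Rightarrow> 'k \<times> 'i \<Rightarrow> ('k \<times> 'i) set" where
  "cowritten W v = {(l, snd v) | l. l \<in> W (snd v)}"

definition atomic_readset :: "('i \<Rightarrow> 'k set) \<Rightarrow> ('k \<times> 'i::linorder) set \<Rightarrow> bool" where
  "atomic_readset W R \<longleftrightarrow>
     (\<forall>ki \<in> R. \<forall>li \<in> cowritten W ki. \<forall>j. (fst li, j) \<in> R \<longrightarrow> j \<ge> snd ki)"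

definition valid_candidate ::
    "('i \<Rightarrow> 'k set) \<Rightarrow> 'k \<Rightarrow> ('k \<times> 'i::linorder) set \<Rightarrow> 'i \<Rightarrow> bool" where
  "valid_candidate W k R t \<longleftrightarrow>
     \<not> (\<exists>lt \<in> cowritten W (k, t). \<exists>j. (fst lt, j) \<in> R \<and> j < t)"

definition lower_bound ::
    "('i \<Rightarrow> 'k set) \<Rightarrow> 'k \<Rightarrow> ('k \<times> 'i::{linorder,zero}) set \<Rightarrow> 'i" where
  "lower_bound W k R = Max ({0} \<union> {i. \<exists>l. (l, i) \<in> R \<and> (k, i) \<in> cowritten W (l, i)})"

(* Returns None for NULL, otherwise Some (k_target, R \<union> {k_target}). *)
definition atomic_read ::
    "('i \<Rightarrow> 'k set) \<Rightarrow> ('k \<Rightarrow> 'i set) \<Rightarrow> 'k \<Rightarrow> ('k \<times> 'i::{linorder,zero}) set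
     \<Rightarrow> (('k \<times> 'i) \<times> ('k \<times> 'i) set) option" where
  "atomic_read W KVI k R =
     (let lower = lower_bound W k R in
      if KVI k = {} \<and> lower = 0 then None
      else (let cands = {t \<in> KVI k. t \<ge> lower \<and> valid_candidate W k R t} in
            if cands = {} then None
            else Some ((k, Max cands), insert (k, Max cands) R)))"

end

theory Submission
  imports Defs
begin

(* Since k_m is in R and k is cowritten with k_m, the lower bound computed by AtomicRead is at
   least m, so the returned k_j has m <= j.  Conversely, k_j is a valid candidate, so R holds no
   version of a key cowritten with k_j (in particular of k itself) older than j; hence j <= m. *)

lemma lower_bound_ge_read_version:
  assumes "finite R" and "(k, m) \<in> R" and "k \<in> W m"
  shows "m \<le> lower_bound W k R"
proof -
  have "{i. \<exists>l. (l, i) \<in> R \<and> (k, i) \<in> cowritten W (l, i)} \<subseteq> snd ` R"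
    by (auto simp: image_iff) (metis snd_conv)
  then have "finite ({0} \<union> {i. \<exists>l. (l, i) \<in> R \<and> (k, i) \<in> cowritten W (l, i)})"
    using \<open>finite R\<close> by (simp add: finite_subset)
  moreover have "m \<in> {i. \<exists>l. (l, i) \<in> R \<and> (k, i) \<in> cowritten W (l, i)}"
    using assms(2,3) by (auto simp: cowritten_def)
  ultimately show ?thesis
    unfolding lower_bound_def by simp
qed

lemma valid_candidate_le_read_version:
  assumes "valid_candidate W k R t" and "k \<in> W t" and "(k, m) \<in> R"
  shows "t \<le> m"
proof (rule ccontr)
  assume "\<not> t \<le> m"
  then have "m < t"
    by simp
  with assms show False
    by (auto simp: valid_candidate_def cowritten_def)
qed

lemma atomic_read_SomeD:
  assumes "finite (KVI k)" and "atomic_read W KVI k R = Some ((k', j), R')"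
  shows "k' = k" and "j \<in> KVI k" and "lower_bound W k R \<le> j"
    and "valid_candidate W k R j" and "R' = insert (k, j) R"
proof -
  define cands where "cands = {t \<in> KVI k. lower_bound W k R \<le> t \<and> valid_candidate W k R t}"
  have "atomic_read W KVI k R =
      (if cands = {} then None else Some ((k, Max cands), insert (k, Max cands) R))"
    by (auto simp: atomic_read_def Let_def cands_def)
  then have "cands \<noteq> {}" and result: "k' = k" "j = Max cands" "R' = insert (k, j) R"
    using assms(2) by (auto split: if_splits)
  moreover have "finite cands"
    using assms(1) by (simp add: cands_def)
  ultimately have "j \<in> cands"
    by simp
  then show "j \<in> KVI k" and "lower_bound W k R \<le> j" and "valid_candidate W k R j"
    by (simp_all add: cands_def)
  show "k' = k" and "R' = insert (k, j) R"
    using result by simp_all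
qed

theorem corollary1:
  fixes W :: "'i::{linorder,zero} \<Rightarrow> 'k set"
    and committed :: "'i set"
    and KVI :: "'k \<Rightarrow> 'i set"
    and R :: "('k \<times> 'i) set"
    and tid :: 'i and k :: 'k and m j :: 'i and R' :: "('k \<times> 'i) set"
  assumes ids_pos: "\<forall>i \<in> committed. 0 < i" and tid_pos: "0 < tid"
    and KVI_fin: "\<forall>l. finite (KVI l)"
    and KVI_committed: "\<forall>l. \<forall>t \<in> KVI l. t \<in> committed \<and> l \<in> W t"
    and T_not_write: "k \<notin> W tid"
    and R_fin: "finite R"
    and R_committed: "\<forall>(l, i) \<in> R. i \<in> committed \<and> l \<in> W i"
    and R_atomic: "atomic_readset W R"
    and km_in: "(k, m) \<in> R"
    and ret: "atomic_read W KVI k R = Some ((k, j), R')"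
  shows "j = m"
proof -
  have "finite (KVI k)"
    using KVI_fin by simp
  note read = atomic_read_SomeD[OF this ret]
  have "k \<in> W m"
    using R_committed km_in by auto
  then have "m \<le> lower_bound W k R"
    by (rule lower_bound_ge_read_version[OF R_fin km_in])
  also have "\<dots> \<le> j"
    by (rule read(3))
  finally have "m \<le> j" .
  moreover have "k \<in> W j"
    using KVI_committed read(2) by simp
  then have "j \<le> m"
    by (rule valid_candidate_le_read_version[OF read(4) _ km_in])
  ultimately show ?thesis
    by simp
qed

end
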